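(* Let $P$ be a finite poset with labeling $\omega:P\to\{1,\dots,p\}$ such that $P$ is $\omega$-consistent with rank function $\rho$, and such that $\omega(x)<\omega(y)$ whenever $\rho(x)<\rho(y)$. Then the Jordan–Hölder set of $(P,\omega)$ is uniquely decomposed as the disjoint union $$\mathcal{L}(P,\omega)=\bigsqcup_{Q}\mathcal{L}(Q,\omega),$$ where the union is over all saturated $\omega$-consistent posets $Q$ that extend $P$ and have the same rank function $\rho$ as $(P,\omega)$.
   Context: Write $x\prec y$ if $y$ covers $x$, $E(P)$ the set of covering pairs. A labeling $\omega$ induces $\epsilon:E(P)\to\{-1,1\}$, $\epsilon(x,y)=1$ if $\omega(x)<\omega(y)$ and $-1$ otherwise. $P$ is $\omega$-consistent if each principal ideal $\Lambda_z=\{w\le z\}$ has the property that $\sum\epsilon(x_{i-1},x_i)$ is the same over all its maximal chains $x_0\prec\cdots\prec x_n$; this common value is $\rho(z)$ (the rank function). The Jordan–Hölder set $\mathcal{L}(P,\omega)$ is the set of permutations $\omega(x_1)\omega(x_2)\cdots\omega(x_p)$ with $x_1,\dots,x_p$ a linear extension of $P$. A poset $Q$ on the same underlying set extends $P$ if $x<_Q y$ whenever $x<_P y$. An $\omega$-consistent poset $Q$ is saturated if any $x,y$ with $|\rho_Q(x)-\rho_Q(y)|=1$ are comparable in $Q$. *)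

theory Defs
  imports Main
begin

definition poset_on :: "'a set \<Rightarrow> ('a \<Rightarrow> 'a \<Rightarrow> bool) \<Rightarrow> bool" where
  "poset_on X le \<longleftrightarrow>
     (\<forall>x y. le x y \<longrightarrow> x \<in> X \<and> y \<in> X) \<and>
     (\<forall>x\<in>X. le x x) \<and>
     (\<forall>x y. le x y \<and> le y x \<longrightarrow> x = y) \<and>
     (\<forall>x y z. le x y \<and> le y z \<longrightarrow> le x z)"

definition less_rel :: "('a \<Rightarrow> 'a \<Rightarrow> bool) \<Rightarrow> 'a \<Rightarrow> 'a \<Rightarrow> bool" where
  "less_rel le x y \<longleftrightarrow> le x y \<and> x \<noteq> y"

definition covers :: "'a set \<Rightarrow> ('a \<Rightarrow> 'a \<Rightarrow> bool) \<Rightarrow> 'a \<Rightarrow> 'a \<Rightarrow> bool" where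
  "covers X le x y \<longleftrightarrow> x \<in> X \<and> y \<in> X \<and> less_rel le x y \<and>
     \<not> (\<exists>z\<in>X. less_rel le x z \<and> less_rel le z y)"

definition eps :: "('a \<Rightarrow> nat) \<Rightarrow> 'a \<Rightarrow> 'a \<Rightarrow> int" where
  "eps \<omega> x y = (if \<omega> x < \<omega> y then 1 else -1)"

definition max_chain :: "'a set \<Rightarrow> ('a \<Rightarrow> 'a \<Rightarrow> bool) \<Rightarrow> 'a \<Rightarrow> 'a list \<Rightarrow> bool" where
  "max_chain X le z cs \<longleftrightarrow> cs \<noteq> [] \<and> last cs = z \<and> hd cs \<in> X \<and>
     \<not> (\<exists>w\<in>X. less_rel le w (hd cs)) \<and>
     (\<forall>i. Suc i < length cs \<longrightarrow> covers X le (cs ! i) (cs ! Suc i))"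

definition chain_sum :: "('a \<Rightarrow> nat) \<Rightarrow> 'a list \<Rightarrow> int" where
  "chain_sum \<omega> cs = (\<Sum>i<length cs - 1. eps \<omega> (cs ! i) (cs ! Suc i))"

definition consistent :: "'a set \<Rightarrow> ('a \<Rightarrow> 'a \<Rightarrow> bool) \<Rightarrow> ('a \<Rightarrow> nat) \<Rightarrow> bool" where
  "consistent X le \<omega> \<longleftrightarrow> (\<forall>z\<in>X. \<forall>c1 c2. max_chain X le z c1 \<and> max_chain X le z c2
      \<longrightarrow> chain_sum \<omega> c1 = chain_sum \<omega> c2)"

definition rank :: "'a set \<Rightarrow> ('a \<Rightarrow> 'a \<Rightarrow> bool) \<Rightarrow> ('a \<Rightarrow> nat) \<Rightarrow> 'a \<Rightarrow> int" where
  "rank X le \<omega> z = (THE r. \<exists>c. max_chain X le z c \<and> chain_sum \<omega> c = r)"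

definition linear_extension :: "'a set \<Rightarrow> ('a \<Rightarrow> 'a \<Rightarrow> bool) \<Rightarrow> 'a list \<Rightarrow> bool" where
  "linear_extension X le xs \<longleftrightarrow> distinct xs \<and> set xs = X \<and>
     (\<forall>i j. i < length xs \<and> j < length xs \<and> less_rel le (xs ! i) (xs ! j) \<longrightarrow> i < j)"

definition jordan_hoelder :: "'a set \<Rightarrow> ('a \<Rightarrow> 'a \<Rightarrow> bool) \<Rightarrow> ('a \<Rightarrow> nat) \<Rightarrow> nat list set" where
  "jordan_hoelder X le \<omega> = {map \<omega> xs | xs. linear_extension X le xs}"

definition extends :: "('a \<Rightarrow> 'a \<Rightarrow> bool) \<Rightarrow> ('a \<Rightarrow> 'a \<Rightarrow> bool) \<Rightarrow> bool" where
  "extends Q P \<longleftrightarrow> (\<forall>x y. less_rel P x y \<longrightarrow> less_rel Q x y)"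

definition saturated :: "'a set \<Rightarrow> ('a \<Rightarrow> 'a \<Rightarrow> bool) \<Rightarrow> ('a \<Rightarrow> nat) \<Rightarrow> bool" where
  "saturated X Q \<omega> \<longleftrightarrow> consistent X Q \<omega> \<and>
     (\<forall>x\<in>X. \<forall>y\<in>X. \<bar>rank X Q \<omega> x - rank X Q \<omega> y\<bar> = 1 \<longrightarrow> Q x y \<or> Q y x)"

end

theory Submission
  imports Defs
begin

(* Fix a linear extension x1 ... xp of P and call two elements adjacent if their ranks differ
   by one; orient each adjacent pair as in the extension. The reflexive-transitive closure of
   these edges is a poset extending P, because a cover of P joins adjacent elements; its covers
   are edges, and along an edge \<epsilon> is the rank increment since \<omega> increases with \<rho>. Hence it is
   \<omega>-consistent with rank \<rho>, saturated, and has x1 ... xp as a linear extension. Conversely, a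
   saturated Q with rank \<rho> admitting x1 ... xp as a linear extension is this closure: its covers
   join adjacent elements, and adjacent elements are Q-comparable in the order of the extension.
   As \<omega> is injective, a word of L(P, \<omega>) determines its linear extension and hence its Q. *)

lemma less_rel_irrefl [simp]: "\<not> less_rel le x x"
  by (simp add: less_rel_def)

lemma less_rel_trans:
  assumes "poset_on X le" "less_rel le a b" "less_rel le b c"
  shows "less_rel le a c"
  using assms unfolding poset_on_def less_rel_def by blast

lemma less_rel_in_carrier:
  assumes "poset_on X le" "less_rel le a b"
  shows "a \<in> X" "b \<in> X"
  using assms unfolding poset_on_def less_rel_def by blast+

lemma tranclp_mono_rel:
  assumes "R\<^sup>+\<^sup>+ x y" "\<And>a b. R a b \<Longrightarrow> S a b"
  shows "S\<^sup>+\<^sup>+ x y"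
  using assms(1) by induction (auto intro: assms(2) tranclp.trancl_into_trancl)

lemma less_rel_imp_tranclp_covers:
  assumes P: "poset_on X le" and F: "finite X" and xy: "less_rel le x y"
  shows "(covers X le)\<^sup>+\<^sup>+ x y"
  using xy
proof (induction "card {z\<in>X. less_rel le x z \<and> less_rel le z y}" arbitrary: x y
    rule: less_induct)
  case less
  show ?case
  proof (cases "\<exists>z\<in>X. less_rel le x z \<and> less_rel le z y")
    case False
    then have "covers X le x y"
      using less.prems less_rel_in_carrier[OF P] unfolding covers_def by blast
    then show ?thesis by blast
  next
    case True
    then obtain z where z: "z \<in> X" "less_rel le x z" "less_rel le z y" by blast
    define I where "I a b = {w\<in>X. less_rel le a w \<and> less_rel le w b}" for a b
    have "z \<in> I x y" "z \<notin> I x z" "z \<notin> I z y"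
      using z unfolding I_def by auto
    moreover have "I x z \<subseteq> I x y" "I z y \<subseteq> I x y"
      using z less_rel_trans[OF P] unfolding I_def by blast+
    moreover have "finite (I x y)" using F unfolding I_def by simp
    ultimately have "card (I x z) < card (I x y)" "card (I z y) < card (I x y)"
      by (metis psubset_card_mono psubsetI)+
    then have "(covers X le)\<^sup>+\<^sup>+ x z" "(covers X le)\<^sup>+\<^sup>+ z y"
      using less.hyps[OF _ z(2)] less.hyps[OF _ z(3)] unfolding I_def by blast+
    then show ?thesis by (rule tranclp_trans)
  qed
qed

lemma max_chain_snoc:
  assumes "max_chain X le x cs" "covers X le x y"
  shows "max_chain X le y (cs @ [y])"
proof -
  have ne: "cs \<noteq> []" and last: "last cs = x" using assms(1) unfolding max_chain_def by auto
  have "covers X le ((cs @ [y]) ! i) ((cs @ [y]) ! Suc i)" if i: "Suc i < length (cs @ [y])" for i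
  proof (cases "Suc i < length cs")
    case True
    then show ?thesis using assms(1) unfolding max_chain_def by (auto simp: nth_append)
  next
    case False
    then have "i = length cs - 1" using i by auto
    then show ?thesis using ne last assms(2) by (auto simp: nth_append last_conv_nth)
  qed
  then show ?thesis using assms(1) ne unfolding max_chain_def by auto
qed

lemma chain_sum_snoc:
  assumes "cs \<noteq> []"
  shows "chain_sum \<omega> (cs @ [y]) = chain_sum \<omega> cs + eps \<omega> (last cs) y"
proof -
  obtain m where m: "length cs = Suc m" using assms by (cases cs) auto
  have "chain_sum \<omega> (cs @ [y]) = (\<Sum>i<m. eps \<omega> ((cs @ [y]) ! i) ((cs @ [y]) ! Suc i))
      + eps \<omega> (cs ! m) y"
    unfolding chain_sum_def using m by (simp add: nth_append)
  also have "(\<Sum>i<m. eps \<omega> ((cs @ [y]) ! i) ((cs @ [y]) ! Suc i)) = chain_sum \<omega> cs"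
    unfolding chain_sum_def using m by (auto simp: nth_append intro!: sum.cong)
  finally show ?thesis using m assms by (simp add: last_conv_nth)
qed

lemma chain_sum_telescope:
  assumes "cs \<noteq> []"
    and "\<And>i. Suc i < length cs \<Longrightarrow> eps \<omega> (cs ! i) (cs ! Suc i) = f (cs ! Suc i) - f (cs ! i)"
  shows "chain_sum \<omega> cs = f (last cs) - f (hd cs)"
proof -
  obtain m where m: "length cs = Suc m" using assms by (cases cs) auto
  have "chain_sum \<omega> cs = (\<Sum>i<m. f (cs ! Suc i) - f (cs ! i))"
    unfolding chain_sum_def using m assms(2) by (auto intro!: sum.cong)
  also have "\<dots> = f (cs ! m) - f (cs ! 0)"
    by (rule sum_lessThan_telescope)
  finally show ?thesis using m assms(1) by (simp add: last_conv_nth hd_conv_nth)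
qed

lemma max_chain_exists:
  assumes P: "poset_on X le" and F: "finite X" and x: "x \<in> X"
  shows "\<exists>cs. max_chain X le x cs"
  using x
proof (induction "card {w\<in>X. less_rel le w x}" arbitrary: x rule: less_induct)
  case less
  show ?case
  proof (cases "\<exists>w\<in>X. less_rel le w x")
    case False
    then have "max_chain X le x [x]" using less.prems unfolding max_chain_def by auto
    then show ?thesis ..
  next
    case True
    then obtain w where "less_rel le w x" by blast
    then have "(covers X le)\<^sup>+\<^sup>+ w x" by (rule less_rel_imp_tranclp_covers[OF P F])
    then obtain y where y: "covers X le y x" by cases blast+
    then have "y \<in> X" "less_rel le y x" unfolding covers_def by auto
    then have "{w\<in>X. less_rel le w y} \<subseteq> {w\<in>X. less_rel le w x}"
      "y \<in> {w\<in>X. less_rel le w x} - {w\<in>X. less_rel le w y}"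
      using less_rel_trans[OF P] by auto
    then have "{w\<in>X. less_rel le w y} \<subset> {w\<in>X. less_rel le w x}" by blast
    then have "card {w\<in>X. less_rel le w y} < card {w\<in>X. less_rel le w x}"
      using F by (simp add: psubset_card_mono)
    then obtain cs where "max_chain X le y cs" using less.hyps[OF _ \<open>y \<in> X\<close>] by blast
    then show ?thesis using max_chain_snoc[OF _ y] by blast
  qed
qed

lemma rank_eq_chain_sum:
  assumes "consistent X le \<omega>" "z \<in> X" "max_chain X le z cs"
  shows "rank X le \<omega> z = chain_sum \<omega> cs"
  unfolding rank_def
proof (rule the_equality)
  show "\<exists>c. max_chain X le z c \<and> chain_sum \<omega> c = chain_sum \<omega> cs" using assms(3) by blast
next
  fix r assume "\<exists>c. max_chain X le z c \<and> chain_sum \<omega> c = r"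
  then obtain c where "max_chain X le z c" "chain_sum \<omega> c = r" by blast
  then show "r = chain_sum \<omega> cs" using assms unfolding consistent_def by blast
qed

lemma rank_minimal:
  assumes "consistent X le \<omega>" "m \<in> X" "\<not> (\<exists>w\<in>X. less_rel le w m)"
  shows "rank X le \<omega> m = 0"
proof -
  have "max_chain X le m [m]" using assms(2,3) unfolding max_chain_def by auto
  then show ?thesis using rank_eq_chain_sum[OF assms(1,2)] by (simp add: chain_sum_def)
qed

lemma rank_covers:
  assumes P: "poset_on X le" and F: "finite X" and C: "consistent X le \<omega>"
    and ab: "covers X le a b"
  shows "rank X le \<omega> b = rank X le \<omega> a + eps \<omega> a b"
proof -
  have "a \<in> X" "b \<in> X" using ab unfolding covers_def by auto
  then obtain cs where cs: "max_chain X le a cs" using max_chain_exists[OF P F] by blast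
  then have "cs \<noteq> []" "last cs = a" unfolding max_chain_def by auto
  then show ?thesis
    using rank_eq_chain_sum[OF C \<open>a \<in> X\<close> cs]
      rank_eq_chain_sum[OF C \<open>b \<in> X\<close> max_chain_snoc[OF cs ab]]
    by (simp add: chain_sum_snoc)
qed

lemma abs_rank_diff_covers:
  assumes "poset_on X le" "finite X" "consistent X le \<omega>" "covers X le a b"
  shows "\<bar>rank X le \<omega> a - rank X le \<omega> b\<bar> = 1"
  using rank_covers[OF assms] by (simp add: eps_def)

lemma chain_sum_eq_potential:
  assumes cov: "\<And>a b. covers X le a b \<Longrightarrow> eps \<omega> a b = f b - f a"
    and min: "\<And>m. m \<in> X \<Longrightarrow> \<not> (\<exists>w\<in>X. less_rel le w m) \<Longrightarrow> f m = 0"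
    and cs: "max_chain X le z cs"
  shows "chain_sum \<omega> cs = f z"
proof -
  have "cs \<noteq> []" "last cs = z" "hd cs \<in> X" "\<not> (\<exists>w\<in>X. less_rel le w (hd cs))"
    and steps: "\<And>i. Suc i < length cs \<Longrightarrow> covers X le (cs ! i) (cs ! Suc i)"
    using cs unfolding max_chain_def by auto
  then show ?thesis using chain_sum_telescope[of cs \<omega> f] cov min by simp
qed

lemma consistent_rank_eq_potential:
  assumes P: "poset_on X le" and F: "finite X"
    and cov: "\<And>a b. covers X le a b \<Longrightarrow> eps \<omega> a b = f b - f a"
    and min: "\<And>m. m \<in> X \<Longrightarrow> \<not> (\<exists>w\<in>X. less_rel le w m) \<Longrightarrow> f m = 0"
  shows "consistent X le \<omega>" and "z \<in> X \<Longrightarrow> rank X le \<omega> z = f z"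
proof -
  note sum = chain_sum_eq_potential[OF cov min]
  show C: "consistent X le \<omega>" unfolding consistent_def using sum by metis
  assume "z \<in> X"
  then obtain cs where "max_chain X le z cs" using max_chain_exists[OF P F] by blast
  then show "rank X le \<omega> z = f z" using rank_eq_chain_sum[OF C \<open>z \<in> X\<close>] sum by simp
qed

lemma eps_eq_diff_if_monotone:
  assumes mono: "\<forall>x\<in>X. \<forall>y\<in>X. \<rho> x < \<rho> y \<longrightarrow> \<omega> x < \<omega> y"
    and "a \<in> X" "b \<in> X" "\<bar>\<rho> a - \<rho> b\<bar> = 1"
  shows "eps \<omega> a b = \<rho> b - \<rho> a"
proof (cases "\<rho> a < \<rho> b")
  case True
  then show ?thesis using mono assms(2-4) by (auto simp: eps_def)
next
  case False
  then have "\<omega> b < \<omega> a" using mono assms(2-4) by auto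
  then show ?thesis using False assms(4) by (auto simp: eps_def)
qed

definition pos :: "'a list \<Rightarrow> 'a \<Rightarrow> nat" where
  "pos xs x = (THE i. i < length xs \<and> xs ! i = x)"

lemma pos_less_length_nth:
  assumes "distinct xs" "x \<in> set xs"
  shows "pos xs x < length xs" "xs ! pos xs x = x"
  using theI'[OF distinct_Ex1[OF assms]] unfolding pos_def by auto

lemma pos_nth:
  assumes "distinct xs" "i < length xs"
  shows "pos xs (xs ! i) = i"
  unfolding pos_def using assms by (auto intro!: the_equality simp: nth_eq_iff_index_eq)

lemma linear_extension_pos_less:
  assumes L: "linear_extension X le xs" and P: "poset_on X le" and ab: "less_rel le a b"
  shows "pos xs a < pos xs b"
proof -
  have d: "distinct xs" and "set xs = X" using L unfolding linear_extension_def by auto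
  then have "a \<in> set xs" "b \<in> set xs" using less_rel_in_carrier[OF P ab] by auto
  then show ?thesis using L pos_less_length_nth[OF d] ab unfolding linear_extension_def by metis
qed

definition rank_step :: "'a set \<Rightarrow> ('a \<Rightarrow> int) \<Rightarrow> 'a list \<Rightarrow> 'a \<Rightarrow> 'a \<Rightarrow> bool" where
  "rank_step X \<rho> xs x y \<longleftrightarrow> x \<in> X \<and> y \<in> X \<and> \<bar>\<rho> x - \<rho> y\<bar> = 1 \<and> pos xs x < pos xs y"

definition saturation :: "'a set \<Rightarrow> ('a \<Rightarrow> int) \<Rightarrow> 'a list \<Rightarrow> 'a \<Rightarrow> 'a \<Rightarrow> bool" where
  "saturation X \<rho> xs x y \<longleftrightarrow> (x \<in> X \<and> x = y) \<or> (rank_step X \<rho> xs)\<^sup>+\<^sup>+ x y"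

lemma tranclp_rank_step_pos_less:
  "(rank_step X \<rho> xs)\<^sup>+\<^sup>+ x y \<Longrightarrow> pos xs x < pos xs y \<and> x \<in> X \<and> y \<in> X"
  by (induction rule: tranclp_induct) (auto simp: rank_step_def)

lemma poset_on_saturation: "poset_on X (saturation X \<rho> xs)"
  unfolding poset_on_def saturation_def
  using tranclp_rank_step_pos_less[of X \<rho> xs] by (auto intro: tranclp_trans)

lemma less_rel_saturation_iff:
  "less_rel (saturation X \<rho> xs) x y \<longleftrightarrow> (rank_step X \<rho> xs)\<^sup>+\<^sup>+ x y"
  unfolding less_rel_def saturation_def using tranclp_rank_step_pos_less by fastforce

lemma covers_saturation_imp_rank_step:
  assumes ab: "covers X (saturation X \<rho> xs) a b"
  shows "rank_step X \<rho> xs a b"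
proof -
  have "(rank_step X \<rho> xs)\<^sup>+\<^sup>+ a b"
    using ab unfolding covers_def less_rel_saturation_iff by blast
  then obtain c where ac: "rank_step X \<rho> xs a c" and cb: "(rank_step X \<rho> xs)\<^sup>*\<^sup>* c b"
    by (metis tranclpD)
  show ?thesis
  proof (cases "c = b")
    case True
    then show ?thesis using ac by simp
  next
    case False
    then have "(rank_step X \<rho> xs)\<^sup>+\<^sup>+ a c" "(rank_step X \<rho> xs)\<^sup>+\<^sup>+ c b"
      using ac cb by (auto dest: rtranclpD)
    then have "less_rel (saturation X \<rho> xs) a c" "less_rel (saturation X \<rho> xs) c b"
      by (simp_all only: less_rel_saturation_iff)
    moreover have "c \<in> X" using ac unfolding rank_step_def by blast
    ultimately show ?thesis using ab unfolding covers_def by blast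
  qed
qed

lemma linear_extension_saturation:
  assumes "distinct xs" "set xs = X"
  shows "linear_extension X (saturation X \<rho> xs) xs"
  unfolding linear_extension_def
proof (intro conjI assms allI impI)
  fix i j assume ij: "i < length xs \<and> j < length xs \<and> less_rel (saturation X \<rho> xs) (xs ! i) (xs ! j)"
  then have "(rank_step X \<rho> xs)\<^sup>+\<^sup>+ (xs ! i) (xs ! j)" by (simp add: less_rel_saturation_iff)
  then have "pos xs (xs ! i) < pos xs (xs ! j)" by (rule tranclp_rank_step_pos_less[THEN conjunct1])
  then show "i < j" using pos_nth[OF assms(1)] ij by simp
qed

lemma saturation_extends:
  assumes P: "poset_on X le" and F: "finite X" and C: "consistent X le \<omega>"
    and L: "linear_extension X le xs"
  shows "extends (saturation X (rank X le \<omega>) xs) le"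
  unfolding extends_def less_rel_saturation_iff
proof (intro allI impI)
  fix x y assume "less_rel le x y"
  then have "(covers X le)\<^sup>+\<^sup>+ x y" by (rule less_rel_imp_tranclp_covers[OF P F])
  moreover have "rank_step X (rank X le \<omega>) xs a b" if ab: "covers X le a b" for a b
    using ab abs_rank_diff_covers[OF P F C ab] linear_extension_pos_less[OF L P]
    unfolding rank_step_def covers_def by blast
  ultimately show "(rank_step X (rank X le \<omega>) xs)\<^sup>+\<^sup>+ x y" by (rule tranclp_mono_rel)
qed

lemma rank_saturation:
  assumes P: "poset_on X le" and F: "finite X" and C: "consistent X le \<omega>"
    and mono: "\<forall>x\<in>X. \<forall>y\<in>X. rank X le \<omega> x < rank X le \<omega> y \<longrightarrow> \<omega> x < \<omega> y"
    and L: "linear_extension X le xs"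
  defines "Q \<equiv> saturation X (rank X le \<omega>) xs"
  shows "consistent X Q \<omega>" and "z \<in> X \<Longrightarrow> rank X Q \<omega> z = rank X le \<omega> z"
proof -
  have "eps \<omega> a b = rank X le \<omega> b - rank X le \<omega> a" if "covers X Q a b" for a b
    using covers_saturation_imp_rank_step[OF that[unfolded Q_def]]
    by (auto simp: rank_step_def intro: eps_eq_diff_if_monotone[OF mono])
  moreover have "rank X le \<omega> m = 0" if "m \<in> X" "\<not> (\<exists>w\<in>X. less_rel Q w m)" for m
    using that saturation_extends[OF P F C L] rank_minimal[OF C]
    unfolding Q_def extends_def by blast
  ultimately show "consistent X Q \<omega>" "z \<in> X \<Longrightarrow> rank X Q \<omega> z = rank X le \<omega> z"
    using consistent_rank_eq_potential[OF poset_on_saturation F] unfolding Q_def by blast+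
qed

lemma saturated_saturation:
  assumes C: "consistent X (saturation X \<rho> xs) \<omega>"
    and R: "\<forall>x\<in>X. rank X (saturation X \<rho> xs) \<omega> x = \<rho> x"
    and d: "distinct xs" and s: "set xs = X"
  shows "saturated X (saturation X \<rho> xs) \<omega>"
  unfolding saturated_def
proof (intro conjI C ballI impI)
  fix x y assume xy: "x \<in> X" "y \<in> X"
    and "\<bar>rank X (saturation X \<rho> xs) \<omega> x - rank X (saturation X \<rho> xs) \<omega> y\<bar> = 1"
  then have adj: "\<bar>\<rho> x - \<rho> y\<bar> = 1" using R by simp
  then have "x \<noteq> y" by auto
  then have "pos xs x \<noteq> pos xs y" using pos_less_length_nth(2)[OF d] xy s by metis
  then have "rank_step X \<rho> xs x y \<or> rank_step X \<rho> xs y x"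
    using adj xy unfolding rank_step_def by auto
  then show "saturation X \<rho> xs x y \<or> saturation X \<rho> xs y x" unfolding saturation_def by blast
qed

lemma saturated_eq_saturation:
  assumes Q: "poset_on X Q" and F: "finite X" and S: "saturated X Q \<omega>"
    and R: "\<forall>x\<in>X. rank X Q \<omega> x = \<rho> x" and L: "linear_extension X Q xs"
  shows "Q = saturation X \<rho> xs"
proof -
  have C: "consistent X Q \<omega>" using S unfolding saturated_def by blast
  have step_iff: "rank_step X \<rho> xs a b \<longleftrightarrow> a \<in> X \<and> b \<in> X \<and> \<bar>\<rho> a - \<rho> b\<bar> = 1 \<and> less_rel Q a b"
    for a b
  proof
    assume ab: "rank_step X \<rho> xs a b"
    then have "a \<in> X" "b \<in> X" "\<bar>\<rho> a - \<rho> b\<bar> = 1" "pos xs a < pos xs b"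
      unfolding rank_step_def by auto
    moreover from this have "Q a b \<or> Q b a" using S R unfolding saturated_def by simp
    ultimately show "a \<in> X \<and> b \<in> X \<and> \<bar>\<rho> a - \<rho> b\<bar> = 1 \<and> less_rel Q a b"
      using linear_extension_pos_less[OF L Q, of b a] unfolding less_rel_def by auto
  next
    assume "a \<in> X \<and> b \<in> X \<and> \<bar>\<rho> a - \<rho> b\<bar> = 1 \<and> less_rel Q a b"
    then show "rank_step X \<rho> xs a b"
      using linear_extension_pos_less[OF L Q] unfolding rank_step_def by blast
  qed
  have "less_rel Q x y \<longleftrightarrow> (rank_step X \<rho> xs)\<^sup>+\<^sup>+ x y" for x y
  proof
    assume "less_rel Q x y"
    then have "(covers X Q)\<^sup>+\<^sup>+ x y" by (rule less_rel_imp_tranclp_covers[OF Q F])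
    moreover have "rank_step X \<rho> xs a b" if ab: "covers X Q a b" for a b
      using ab abs_rank_diff_covers[OF Q F C ab] R step_iff unfolding covers_def by auto
    ultimately show "(rank_step X \<rho> xs)\<^sup>+\<^sup>+ x y" by (rule tranclp_mono_rel)
  next
    assume "(rank_step X \<rho> xs)\<^sup>+\<^sup>+ x y"
    then show "less_rel Q x y"
      by induction (auto simp: step_iff intro: less_rel_trans[OF Q])
  qed
  then show ?thesis
    using Q unfolding fun_eq_iff poset_on_def less_rel_def saturation_def by metis
qed

lemma linear_extension_if_extends:
  assumes "extends Q P" "linear_extension X Q xs"
  shows "linear_extension X P xs"
  using assms unfolding extends_def linear_extension_def by blast

lemma linear_extensions_eq_if_map_eq:
  assumes "inj_on \<omega> X" "linear_extension X P xs" "linear_extension X Q ys"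
    and "map \<omega> xs = map \<omega> ys"
  shows "xs = ys"
proof -
  have "set xs = X" "set ys = X" using assms(2,3) unfolding linear_extension_def by auto
  then show ?thesis using assms(1,4) inj_on_map_eq_map[of \<omega> xs ys] by simp
qed

theorem theorem3p2:
  fixes X :: "'a set" and P :: "'a \<Rightarrow> 'a \<Rightarrow> bool" and \<omega> :: "'a \<Rightarrow> nat"
  assumes "finite X"
    and "poset_on X P"
    and "bij_betw \<omega> X {1..card X}"
    and "consistent X P \<omega>"
    and "\<forall>x\<in>X. \<forall>y\<in>X. rank X P \<omega> x < rank X P \<omega> y \<longrightarrow> \<omega> x < \<omega> y"
  defines "S \<equiv> {Q. poset_on X Q \<and> extends Q P \<and> saturated X Q \<omega> \<and>
                    (\<forall>x\<in>X. rank X Q \<omega> x = rank X P \<omega> x)}"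
  shows "jordan_hoelder X P \<omega> = (\<Union>Q\<in>S. jordan_hoelder X Q \<omega>)
     \<and> (\<forall>Q1\<in>S. \<forall>Q2\<in>S. Q1 \<noteq> Q2 \<longrightarrow> jordan_hoelder X Q1 \<omega> \<inter> jordan_hoelder X Q2 \<omega> = {})"
proof (intro conjI)
  note F = assms(1) and P = assms(2) and C = assms(4) and mono = assms(5)
  have saturation_in_S: "saturation X (rank X P \<omega>) xs \<in> S
      \<and> linear_extension X (saturation X (rank X P \<omega>) xs) xs" if L: "linear_extension X P xs" for xs
  proof -
    have "distinct xs" "set xs = X" using L unfolding linear_extension_def by auto
    then show ?thesis
      using rank_saturation[OF P F C mono L] saturated_saturation poset_on_saturation
        saturation_extends[OF P F C L] linear_extension_saturation
      unfolding S_def by blast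
  qed
  show "jordan_hoelder X P \<omega> = (\<Union>Q\<in>S. jordan_hoelder X Q \<omega>)"
    using saturation_in_S linear_extension_if_extends unfolding jordan_hoelder_def S_def by blast
  show "\<forall>Q1\<in>S. \<forall>Q2\<in>S. Q1 \<noteq> Q2 \<longrightarrow> jordan_hoelder X Q1 \<omega> \<inter> jordan_hoelder X Q2 \<omega> = {}"
  proof (intro ballI impI equals0I)
    fix Q1 Q2 w assume Q12: "Q1 \<in> S" "Q2 \<in> S" "Q1 \<noteq> Q2"
      and "w \<in> jordan_hoelder X Q1 \<omega> \<inter> jordan_hoelder X Q2 \<omega>"
    then obtain xs1 xs2 where "map \<omega> xs1 = map \<omega> xs2"
      and L1: "linear_extension X Q1 xs1" and L2: "linear_extension X Q2 xs2"
      unfolding jordan_hoelder_def by blast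
    then have "xs1 = xs2"
      using linear_extensions_eq_if_map_eq bij_betw_imp_inj_on[OF assms(3)] by blast
    moreover have "Q1 = saturation X (rank X P \<omega>) xs1" "Q2 = saturation X (rank X P \<omega>) xs2"
      using Q12 L1 L2 saturated_eq_saturation[OF _ F] unfolding S_def by blast+
    ultimately show False using Q12 by simp
  qed
qed

end
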